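(* Let $0<i<n$. Then the inclusion $\boldsymbol\Lambda^n_i\cup\Delta^n\hookrightarrow\boldsymbol\Delta^n$ is an inner $n$-expansion.
   Context: The thick simplex $\boldsymbol\Delta^n$ is the simplicial set whose $m$-simplices are all functions $\{0,\dots,m\}\to\{0,\dots,n\}$ (the nerve of the groupoid on $\{0,..,n\}$ with one morphism between any two objects); $\Delta^n\subset\boldsymbol\Delta^n$ is the simplicial subset of monotone functions. The thick horn $\boldsymbol\Lambda^n_i\subset\boldsymbol\Delta^n$ is the union, over $j\ne i$, of the simplicial subsets consisting of functions whose image avoids $j$ (equivalently $\Lambda^n_i\times_\Delta\boldsymbol\Delta$, the coend $\int^{p}(\Lambda^n_i)_p\times\boldsymbol\Delta^p$). $\Lambda^p_i=\bigcup_{j\ne i}\partial_j\Delta^p$. For $m>0$, an inclusion $S\hookrightarrow T$ is an inner $m$-expansion if there is a filtration $S=F_{-1}T\subset F_0T\subset\cdots$ with $T=\bigcup_\ell F_\ell T$, a weakly monotone sequence $n_\ell\ge m$, indices $0<i_\ell<n_\ell$, and maps $x_\ell:\Delta^{n_\ell}\to F_\ell T$, $y_\ell:\Lambda^{n_\ell}_{i_\ell}\to F_{\ell-1}T$ making $F_\ell T$ the pushout of $F_{\ell-1}T\leftarrow\Lambda^{n_\ell}_{i_\ell}\hookrightarrow\Delta^{n_\ell}$. *)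

theory Defs
  imports Main "HOL-Library.Extended_Nat"
begin

(* An m-simplex of the thick simplex (thick N), i.e. a function {0..m} -> {0..N},
   is represented by the list [s 0, ..., s m] (length m+1, entries <= N). *)
definition thick :: "nat \<Rightarrow> nat list set" where
  "thick N = {s. s \<noteq> [] \<and> set s \<subseteq> {0..N}}"

(* simplicial operator: precomposition of s : [m] -> [N] with a monotone
   theta : [k] -> [m], theta given as a nonempty sorted list of indices < length s *)
definition valid_op :: "nat list \<Rightarrow> nat list \<Rightarrow> bool" where
  "valid_op s \<theta> \<longleftrightarrow> \<theta> \<noteq> [] \<and> sorted \<theta> \<and> (\<forall>j\<in>set \<theta>. j < length s)"

definition act :: "nat list \<Rightarrow> nat list \<Rightarrow> nat list" where
  "act s \<theta> = map (\<lambda>j. s ! j) \<theta>"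

definition ssubset :: "nat \<Rightarrow> nat list set \<Rightarrow> bool" where
  "ssubset N X \<longleftrightarrow> X \<subseteq> thick N \<and> (\<forall>s\<in>X. \<forall>\<theta>. valid_op s \<theta> \<longrightarrow> act s \<theta> \<in> X)"

definition simplex :: "nat \<Rightarrow> nat list set" where
  "simplex p = {s \<in> thick p. sorted s}"

definition face :: "nat \<Rightarrow> nat \<Rightarrow> nat list set" where
  "face p j = {s \<in> simplex p. j \<notin> set s}"

definition horn :: "nat \<Rightarrow> nat \<Rightarrow> nat list set" where
  "horn p i = (\<Union>j\<in>{0..p} - {i}. face p j)"

definition thick_horn :: "nat \<Rightarrow> nat \<Rightarrow> nat list set" where
  "thick_horn N i = (\<Union>j\<in>{0..N} - {i}. {s \<in> thick N. j \<notin> set s})"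

definition smap :: "nat list set \<Rightarrow> nat list set \<Rightarrow> (nat list \<Rightarrow> nat list) \<Rightarrow> bool" where
  "smap X Y f \<longleftrightarrow> (\<forall>s\<in>X. f s \<in> Y \<and> length (f s) = length s \<and>
      (\<forall>\<theta>. valid_op s \<theta> \<longrightarrow> f (act s \<theta>) = act (f s) \<theta>))"

(* D is the pushout of  A <-y- C >-> B  (C \<subseteq> B the inclusion), with legs the inclusion
   A \<subseteq> D and x : B -> D.  Pushouts of simplicial sets are computed degreewise, and
   a commutative square of sets along an injection C >-> B is a pushout iff
   A -> D is injective (here an inclusion), x is injective on B - C, x(B - C) is disjoint
   from A, and A \<union> x(B) = D. *)
definition pushout_incl ::
  "nat list set \<Rightarrow> nat list set \<Rightarrow> nat list set \<Rightarrow> nat list set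
   \<Rightarrow> (nat list \<Rightarrow> nat list) \<Rightarrow> (nat list \<Rightarrow> nat list) \<Rightarrow> bool" where
  "pushout_incl A C B D y x \<longleftrightarrow>
     C \<subseteq> B \<and> A \<subseteq> D \<and> (\<forall>c\<in>C. x c = y c) \<and>
     D = A \<union> x ` B \<and> inj_on x (B - C) \<and> x ` (B - C) \<inter> A = {}"

(* S >-> T (simplicial subsets of thick N) is an inner m-expansion.
   Index shift: F 0 = F_{-1}T = S, F (l+1) = F_l T;  the filtration has L steps,
   L finite or infinite. *)
definition inner_expansion :: "nat \<Rightarrow> nat \<Rightarrow> nat list set \<Rightarrow> nat list set \<Rightarrow> bool" where
  "inner_expansion N m S T \<longleftrightarrow> 0 < m \<and> ssubset N S \<and> ssubset N T \<and> S \<subseteq> T \<and>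
    (\<exists>(L::enat) (F::nat \<Rightarrow> nat list set) (ns::nat \<Rightarrow> nat) (is::nat \<Rightarrow> nat)
        (xs::nat \<Rightarrow> nat list \<Rightarrow> nat list) (ys::nat \<Rightarrow> nat list \<Rightarrow> nat list).
       F 0 = S \<and>
       T = (\<Union>k\<in>{k. enat k \<le> L}. F k) \<and>
       (\<forall>k. enat k \<le> L \<longrightarrow> ssubset N (F k) \<and> F k \<subseteq> T) \<and>
       (\<forall>l. enat l < L \<longrightarrow>
          m \<le> ns l \<and> 0 < is l \<and> is l < ns l \<and>
          (enat (Suc l) < L \<longrightarrow> ns l \<le> ns (Suc l)) \<and>
          smap (simplex (ns l)) (F (Suc l)) (xs l) \<and>
          smap (horn (ns l) (is l)) (F l) (ys l) \<and>
          pushout_incl (F l) (horn (ns l) (is l)) (simplex (ns l)) (F (Suc l)) (ys l) (xs l)))"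

end

theory Submission
  imports Defs "HOL-Library.Sublist" "HOL-Library.Infinite_Set"
begin

text \<open>A nondegenerate simplex of the thick simplex is a word over \<open>{0..n}\<close> without
  two equal adjacent letters; every simplex is a degeneracy of one, namely \<open>remdups_adj\<close> of it.
  A partial involution \<open>toggle i\<close> pairs the nondegenerate simplices not in the source
  \<open>thick_horn n i \<union> simplex n\<close>: a word \<open>t\<close> containing \<open>i\<close> at an inner position \<open>k\<close> is paired with
  its \<open>k\<close>-th face, and the words left unpaired lie in the thick horn. Attaching the longer word \<open>t\<close>
  of each pair along \<open>\<Lambda>\<^sup>p\<^sub>k\<close>, in order of increasing length and decreasing number of letters \<open>i\<close>,
  exhausts \<open>\<Delta>\<^sup>n\<close>: the other faces of \<open>t\<close> are in the source, are earlier top words, or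
  are faces of earlier top words, while the simplices of \<open>\<Delta>\<^sup>p\<close> outside the horn map injectively
  to \<open>t\<close> or its \<open>k\<close>-th face and so are new, because \<open>t\<close> has different letters at \<open>k - 1\<close> and \<open>k + 1\<close>.\<close>

fun del_nth :: "nat \<Rightarrow> 'a list \<Rightarrow> 'a list" where
  "del_nth _ [] = []"
| "del_nth 0 (x # xs) = xs"
| "del_nth (Suc j) (x # xs) = x # del_nth j xs"

lemma del_nth_conv_take_drop: "del_nth j xs = take j xs @ drop (Suc j) xs"
  by (induction j xs rule: del_nth.induct) auto

lemma length_del_nth [simp]: "j < length xs \<Longrightarrow> length (del_nth j xs) = length xs - 1"
  by (induction j xs rule: del_nth.induct) auto

lemma nth_del_nth:
  "j < length xs \<Longrightarrow> i < length xs - 1 \<Longrightarrow> del_nth j xs ! i = (if i < j then xs ! i else xs ! Suc i)"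
  unfolding del_nth_conv_take_drop by (auto simp: nth_append min_def)

lemma count_list_del_nth:
  "j < length xs \<Longrightarrow> count_list (del_nth j xs) a = count_list xs a - (if xs ! j = a then 1 else 0)"
proof (induction j xs rule: del_nth.induct)
  case (3 j x xs)
  have "0 < count_list xs (xs ! j)"
    using 3(2) nth_mem[of j xs] count_list_0_iff[of xs "xs ! j"] by auto
  then show ?case using 3 by (cases "xs ! j = a") auto
qed auto

lemma del_nth_inj_on_distinct_adj:
  assumes "distinct_adj xs" "j < length xs" "k < length xs" "del_nth j xs = del_nth k xs"
  shows "j = k"
proof (rule ccontr)
  assume "j \<noteq> k"
  then consider "j < k" | "k < j" by linarith
  then show False
  proof cases
    case 1
    then have "xs ! j = xs ! Suc j"
      using assms(3,4) nth_del_nth[of j xs j] nth_del_nth[of k xs j] by simp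
    then show False using assms(1,3) 1 distinct_adj_nth by fastforce
  next
    case 2
    then have "xs ! k = xs ! Suc k"
      using assms(2,4) nth_del_nth[of j xs k] nth_del_nth[of k xs k] by simp
    then show False using assms(1,2) 2 distinct_adj_nth by fastforce
  qed
qed

lemma subseq_Suc_length_del_nth:
  "subseq xs ys \<Longrightarrow> Suc (length xs) = length ys \<Longrightarrow> \<exists>j<length ys. xs = del_nth j ys"
proof (induction ys arbitrary: xs)
  case (Cons y ys)
  from Cons.prems(1) show ?case
  proof (cases rule: list_emb.cases)
    case list_emb_Cons
    then have "xs = ys" using subseq_same_length Cons.prems(2) by simp
    then show ?thesis by (intro exI[of _ 0]) simp
  next
    case (list_emb_Cons2 x xs')
    then obtain j where "j < length ys" "xs' = del_nth j ys" using Cons.IH Cons.prems(2) by auto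
    then show ?thesis using list_emb_Cons2 by (intro exI[of _ "Suc j"]) simp
  qed (use Cons.prems in simp)
qed simp

lemma sorted_wrt_less_if_distinct_adj: "sorted xs \<Longrightarrow> distinct_adj xs \<Longrightarrow> sorted_wrt (<) xs"
  by (auto simp: successively_conv_sorted_wrt[symmetric] successively_conv_nth distinct_adj_conv_nth
      sorted_iff_nth_mono order_less_le)

lemma sorted_gap_notin:
  assumes "sorted s" "Suc i < length s" "s ! i < c" "c < s ! Suc i"
  shows "c \<notin> set s"
proof
  assume "c \<in> set s"
  then obtain q where q: "q < length s" "s ! q = c" by (auto simp: in_set_conv_nth)
  show False
  proof (cases "q \<le> i")
    case True
    then show False using q assms sorted_nth_mono[of s q i] by simp
  next
    case False
    then show False using q assms sorted_nth_mono[of s "Suc i" q] by simp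
  qed
qed

lemma distinct_adj_concat_replicate:
  assumes "distinct_adj xs" "xs \<noteq> []" "last xs \<noteq> hd xs"
  shows "distinct_adj (concat (replicate m xs))"
proof (induction m)
  case (Suc m)
  then show ?case using assms by (cases m) (auto simp: distinct_adj_append_iff)
qed simp

lemma list_eq_by_injective_steps:
  assumes "map f xs = map f ys" "xs ! 0 = ys ! 0"
    and "\<And>i. Suc i < length xs \<Longrightarrow> xs ! Suc i \<in> N (xs ! i)"
    and "\<And>i. Suc i < length ys \<Longrightarrow> ys ! Suc i \<in> N (ys ! i)"
    and "\<And>a. inj_on f (N a)"
  shows "xs = ys"
proof -
  have len: "length xs = length ys" using assms(1) by (rule map_eq_imp_length_eq)
  have "xs ! i = ys ! i" if "i < length xs" for i
    using that
  proof (induction i)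
    case (Suc i)
    have IH: "xs ! i = ys ! i" using Suc by simp
    have "xs ! Suc i \<in> N (xs ! i)" "ys ! Suc i \<in> N (ys ! i)" using assms(3,4) Suc.prems len by auto
    moreover have "f (xs ! Suc i) = f (ys ! Suc i)"
      using Suc.prems len nth_map[of _ xs f] nth_map[of _ ys f] assms(1) by metis
    ultimately show ?case using inj_onD[OF assms(5)] IH by metis
  qed (use assms(2) in simp)
  then show ?thesis using len by (simp add: nth_equalityI)
qed

lemma remdups_adj_map_if_adjacent_inj:
  "(\<And>i. Suc i < length s \<Longrightarrow> s ! i \<noteq> s ! Suc i \<Longrightarrow> f (s ! i) \<noteq> f (s ! Suc i)) \<Longrightarrow>
   remdups_adj (map f s) = map f (remdups_adj s)"
proof (induction s rule: remdups_adj.induct)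
  case (3 x y xs)
  have "\<And>i. Suc i < length (y # xs) \<Longrightarrow> (y # xs) ! i \<noteq> (y # xs) ! Suc i \<Longrightarrow>
      f ((y # xs) ! i) \<noteq> f ((y # xs) ! Suc i)"
    using 3(3)[of "Suc _"] by simp
  moreover have "x \<noteq> y \<Longrightarrow> f x \<noteq> f y" using 3(3)[of 0] by simp
  ultimately show ?case using 3(1,2) by (cases "x = y") auto
qed auto

section \<open>Simplicial operators and generated simplicial subsets\<close>

lemma length_act [simp]: "length (act s \<theta>) = length \<theta>"
  by (simp add: act_def)

lemma set_act: "valid_op s \<theta> \<Longrightarrow> set (act s \<theta>) \<subseteq> set s"
  unfolding valid_op_def act_def by auto

lemma act_act: "valid_op s \<theta> \<Longrightarrow> act (act t s) \<theta> = act t (act s \<theta>)"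
  unfolding act_def valid_op_def by auto

lemma valid_op_act: "valid_op t s \<Longrightarrow> valid_op s \<theta> \<Longrightarrow> valid_op t (act s \<theta>)"
  unfolding valid_op_def act_def by (auto simp: sorted_iff_nth_mono)

lemma valid_op_nonempty: "valid_op g \<theta> \<Longrightarrow> g \<noteq> [] \<and> act g \<theta> \<noteq> []"
  unfolding valid_op_def act_def by (cases \<theta>) auto

lemma act_in_thick: "s \<in> thick N \<Longrightarrow> valid_op s \<theta> \<Longrightarrow> act s \<theta> \<in> thick N"
  unfolding thick_def valid_op_def act_def by auto

lemma valid_op_iff_simplex: "s \<noteq> [] \<Longrightarrow> valid_op s \<theta> \<longleftrightarrow> \<theta> \<in> simplex (length s - 1)"
  unfolding valid_op_def simplex_def thick_def by (cases s) (auto simp: less_Suc_eq_le)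

lemma remdups_adj_in_thick: "w \<in> thick n \<Longrightarrow> remdups_adj w \<in> thick n"
  by (simp add: thick_def)

lemma ssubset_Un: "ssubset N A \<Longrightarrow> ssubset N B \<Longrightarrow> ssubset N (A \<union> B)"
  unfolding ssubset_def by blast

lemma ssubset_UN: "(\<And>i. i \<in> I \<Longrightarrow> ssubset N (A i)) \<Longrightarrow> ssubset N (\<Union>i\<in>I. A i)"
  unfolding ssubset_def by blast

lemma ssubset_thick: "ssubset N (thick N)"
  unfolding ssubset_def by (auto intro: act_in_thick)

lemma thick_horn_iff: "w \<in> thick_horn n h \<longleftrightarrow> w \<in> thick n \<and> (\<exists>j\<le>n. j \<noteq> h \<and> j \<notin> set w)"
  unfolding thick_horn_def by auto

lemma ssubset_thick_horn: "ssubset n (thick_horn n h)"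
  unfolding ssubset_def
proof (intro conjI ballI allI impI)
  fix s \<theta> assume "s \<in> thick_horn n h" "valid_op s \<theta>"
  then show "act s \<theta> \<in> thick_horn n h"
    using act_in_thick set_act unfolding thick_horn_iff by blast
qed (auto simp: thick_horn_iff)

lemma ssubset_simplex: "ssubset n (simplex n)"
  unfolding ssubset_def
proof (intro conjI ballI allI impI)
  fix s \<theta> assume "s \<in> simplex n" "valid_op s \<theta>"
  moreover have "sorted (act s \<theta>)" if "sorted s" "valid_op s \<theta>"
    using that unfolding valid_op_def act_def by (auto simp: sorted_iff_nth_mono)
  ultimately show "act s \<theta> \<in> simplex n" using act_in_thick unfolding simplex_def by blast
qed (auto simp: simplex_def)

definition generated :: "nat list \<Rightarrow> nat list set" where
  "generated g = act g ` simplex (length g - 1)"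

lemma generated_iff: "g \<noteq> [] \<Longrightarrow> w \<in> generated g \<longleftrightarrow> (\<exists>\<theta>. valid_op g \<theta> \<and> w = act g \<theta>)"
  unfolding generated_def using valid_op_iff_simplex by blast

lemma act_in_generated: "valid_op g \<theta> \<Longrightarrow> act g \<theta> \<in> generated g"
  using generated_iff valid_op_nonempty by blast

lemma self_in_generated: "g \<noteq> [] \<Longrightarrow> g \<in> generated g"
  using act_in_generated[of g "[0..<length g]"] by (simp add: valid_op_def act_def map_nth)

lemma generated_trans:
  assumes "w \<in> generated g" "g \<in> generated g'" "g' \<noteq> []"
  shows "w \<in> generated g'"
proof -
  obtain s where s: "valid_op g' s" "g = act g' s" using assms(2,3) generated_iff by blast
  then obtain \<theta> where \<theta>: "valid_op g \<theta>" "w = act g \<theta>"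
    using assms(1) generated_iff valid_op_nonempty by blast
  then have "valid_op s \<theta>" using s(2) by (simp add: valid_op_def)
  then show ?thesis using s \<theta> act_in_generated[OF valid_op_act] act_act by simp
qed

lemma ssubset_generated_subset:
  assumes "ssubset N X" "g \<in> X"
  shows "generated g \<subseteq> X"
proof
  fix w assume "w \<in> generated g"
  moreover have "g \<noteq> []" using assms unfolding ssubset_def thick_def by blast
  ultimately obtain \<theta> where "valid_op g \<theta>" "w = act g \<theta>" using generated_iff by blast
  then show "w \<in> X" using assms unfolding ssubset_def by blast
qed

lemma ssubset_generated: "g \<in> thick N \<Longrightarrow> ssubset N (generated g)"
  unfolding ssubset_def
proof (intro conjI ballI allI impI subsetI)
  assume g: "g \<in> thick N"
  show "w \<in> thick N" if w: "w \<in> generated g" for w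
  proof -
    obtain \<theta> where "valid_op g \<theta>" "w = act g \<theta>"
      using w g generated_iff by (auto simp: thick_def)
    then show ?thesis using g act_in_thick by simp
  qed
  show "act s \<theta> \<in> generated g" if "s \<in> generated g" "valid_op s \<theta>" for s \<theta>
    using generated_trans[OF act_in_generated[OF that(2)] that(1)] g by (simp add: thick_def)
qed

lemma generated_Cons: "w \<in> generated g \<Longrightarrow> g \<noteq> [] \<Longrightarrow> w \<in> generated (x # g)"
proof -
  assume "w \<in> generated g" "g \<noteq> []"
  then obtain \<theta> where "valid_op g \<theta>" "w = act g \<theta>" using generated_iff by blast
  then show ?thesis
    using act_in_generated[of "x # g" "map Suc \<theta>"] by (simp add: valid_op_def act_def sorted_map comp_def)
qed

lemma Cons_in_generated_Cons: "w \<in> generated g \<Longrightarrow> g \<noteq> [] \<Longrightarrow> x # w \<in> generated (x # g)"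
proof -
  assume "w \<in> generated g" "g \<noteq> []"
  then obtain \<theta> where "valid_op g \<theta>" "w = act g \<theta>" using generated_iff by blast
  then show ?thesis
    using act_in_generated[of "x # g" "0 # map Suc \<theta>"] by (simp add: valid_op_def act_def sorted_map comp_def)
qed

lemma Cons_in_generated_self_Cons: "w \<in> generated (x # g) \<Longrightarrow> x # w \<in> generated (x # g)"
proof -
  assume "w \<in> generated (x # g)"
  then obtain \<theta> where "valid_op (x # g) \<theta>" "w = act (x # g) \<theta>" using generated_iff by blast
  then show ?thesis using act_in_generated[of "x # g" "0 # \<theta>"] by (simp add: valid_op_def act_def)
qed

lemma remdups_adj_in_generated: "w \<noteq> [] \<Longrightarrow> remdups_adj w \<in> generated w"
proof (induction w rule: remdups_adj.induct)
  case (3 x y xs)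
  then show ?case by (cases "x = y") (auto intro: generated_Cons Cons_in_generated_Cons)
qed (auto intro: self_in_generated)

lemma in_generated_remdups_adj: "w \<noteq> [] \<Longrightarrow> w \<in> generated (remdups_adj w)"
proof (induction w rule: remdups_adj.induct)
  case (3 x y xs)
  show ?case
  proof (cases "x = y")
    case True
    obtain r where "remdups_adj (x # xs) = x # r" by (metis remdups_adj_Cons_alt)
    then show ?thesis using True 3(1) Cons_in_generated_self_Cons[of "x # xs" x r] by simp
  next
    case False
    then show ?thesis using 3(2) Cons_in_generated_Cons by simp
  qed
qed (auto intro: self_in_generated)

lemma del_nth_in_generated: "j < length t \<Longrightarrow> 1 < length t \<Longrightarrow> del_nth j t \<in> generated t"
proof (induction j t rule: del_nth.induct)
  case (2 x xs)
  then show ?case using generated_Cons self_in_generated by simp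
next
  case (3 j x xs)
  show ?case
  proof (cases "1 < length xs")
    case True
    then show ?thesis using 3 Cons_in_generated_Cons by simp
  next
    case False
    then obtain y where "xs = [y]" using 3(2) by (cases xs) auto
    then show ?thesis using 3(2) act_in_generated[of "x # xs" "[0]"] by (simp add: valid_op_def act_def)
  qed
qed simp

lemma subseq_if_in_generated:
  assumes "distinct_adj w" "w \<in> generated g" "g \<noteq> []"
  shows "subseq w g"
proof -
  obtain \<theta> where \<theta>: "valid_op g \<theta>" "w = act g \<theta>" using assms(2,3) generated_iff by blast
  have "distinct_adj \<theta>" "sorted \<theta>"
    using \<theta> assms(1) distinct_adj_mapD by (auto simp: act_def valid_op_def)
  then have "sorted_wrt (<) \<theta>" by (simp add: sorted_wrt_less_if_distinct_adj)
  then have "subseq \<theta> [0..<length g]"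
    using \<theta>(1) by (intro sorted_subset_imp_subseq) (auto simp: valid_op_def)
  then have "subseq (map ((!) g) \<theta>) (map ((!) g) [0..<length g])" by (rule subseq_map)
  then show ?thesis using \<theta>(2) by (simp add: act_def map_nth)
qed

lemma act_in_generated_del_nth:
  assumes "1 < length t" "s \<in> simplex (length t - 1)" "j < length t" "j \<notin> set s"
  shows "act t s \<in> generated (del_nth j t)"
proof -
  define \<theta> where "\<theta> = map (\<lambda>x. if x < j then x else x - 1) s"
  have s: "s \<noteq> []" "sorted s" "\<forall>x\<in>set s. x < length t"
    using assms(1,2) unfolding simplex_def thick_def by auto
  have "sorted \<theta>" unfolding \<theta>_def sorted_map by (rule sorted_wrt_mono_rel[OF _ s(2)]) auto
  moreover have "x < length (del_nth j t)" if "x \<in> set \<theta>" for x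
    using that s(3) assms(1,3,4) unfolding \<theta>_def by fastforce
  ultimately have "valid_op (del_nth j t) \<theta>" using s(1) by (simp add: valid_op_def \<theta>_def)
  moreover have "del_nth j t ! (if x < j then x else x - 1) = t ! x" if "x \<in> set s" for x
  proof -
    have "x < length t" "x \<noteq> j" using that s(3) assms(4) by auto
    then show ?thesis using assms(3) by (cases "x < j") (auto simp: nth_del_nth)
  qed
  then have "act (del_nth j t) \<theta> = act t s" unfolding act_def \<theta>_def by simp
  ultimately show ?thesis by (metis act_in_generated)
qed

section \<open>Interior simplices of a horn\<close>

lemma horn_iff: "s \<in> horn p k \<longleftrightarrow> s \<in> simplex p \<and> (\<exists>j\<le>p. j \<noteq> k \<and> j \<notin> set s)"
  unfolding horn_def face_def by auto

lemma simplex_minus_horn_iff: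
  "s \<in> simplex p - horn p k \<longleftrightarrow> s \<in> simplex p \<and> (\<forall>j\<le>p. j \<noteq> k \<longrightarrow> j \<in> set s)"
  by (auto simp: horn_iff)

definition interior_step :: "nat \<Rightarrow> nat \<Rightarrow> nat \<Rightarrow> nat set" where
  "interior_step p k a = {b. b \<le> p \<and> (b = a \<or> b = Suc a \<or> (Suc a = k \<and> b = Suc k))}"

lemma interior_step_nth:
  assumes s: "s \<in> simplex p - horn p k" and "Suc i < length s" "k < p"
  shows "s ! Suc i \<in> interior_step p k (s ! i)"
proof -
  have sorted: "sorted s" and bound: "set s \<subseteq> {0..p}" and full: "\<And>j. j \<le> p \<Longrightarrow> j \<noteq> k \<Longrightarrow> j \<in> set s"
    using s simplex_minus_horn_iff[of s p k] by (auto simp: simplex_def thick_def)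
  have le: "s ! i \<le> s ! Suc i" using sorted assms(2) by (simp add: sorted_iff_nth_mono)
  have "s ! Suc i \<le> p" using bound assms(2) nth_mem by fastforce
  moreover have "Suc (s ! i) = k \<and> s ! Suc i = Suc k" if "Suc (s ! i) < s ! Suc i"
  proof -
    have gap: "Suc (s ! i) = k"
      using full[of "Suc (s ! i)"] sorted_gap_notin[OF sorted assms(2)] that \<open>s ! Suc i \<le> p\<close> by auto
    have "Suc k \<in> set s" using full[of "Suc k"] assms(3) by simp
    then have "\<not> Suc k < s ! Suc i" using sorted_gap_notin[OF sorted assms(2), of "Suc k"] gap by auto
    then show ?thesis using gap that by linarith
  qed
  ultimately show ?thesis using le unfolding interior_step_def by force
qed

lemma interior_nth_0:
  assumes "s \<in> simplex p - horn p k" "0 < k"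
  shows "s ! 0 = 0"
proof -
  have "0 \<in> set s" "sorted s" using assms simplex_minus_horn_iff[of s p k] by (auto simp: simplex_def)
  then obtain q where "q < length s" "s ! q = 0" by (auto simp: in_set_conv_nth)
  then show ?thesis using sorted_nth_mono[OF \<open>sorted s\<close>, of 0 q] by simp
qed

lemma inj_on_nth_interior_step:
  assumes "distinct_adj t" "length t = Suc p" "t ! (k - 1) \<noteq> t ! Suc k"
  shows "inj_on ((!) t) (interior_step p k a)"
proof -
  have "t ! x \<noteq> t ! y" if "x \<in> interior_step p k a" "y \<in> interior_step p k a" "x < y" for x y
  proof (cases "y = Suc x")
    case True
    then show ?thesis using that assms(1,2) distinct_adj_nth[of t x] by (auto simp: interior_step_def)
  next
    case False
    then have "x = k - 1" "y = Suc k" using that by (auto simp: interior_step_def)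
    then show ?thesis using assms(3) by simp
  qed
  then show ?thesis by (metis inj_onI linorder_neqE_nat)
qed

lemma inj_on_act_interior:
  assumes "distinct_adj t" "length t = Suc p" "0 < k" "k < p" "t ! (k - 1) \<noteq> t ! Suc k"
  shows "inj_on (act t) (simplex p - horn p k)"
proof (rule inj_onI)
  fix s s' assume s: "s \<in> simplex p - horn p k" and s': "s' \<in> simplex p - horn p k"
    and "act t s = act t s'"
  then show "s = s'"
    using interior_nth_0[OF s assms(3)] interior_nth_0[OF s' assms(3)]
      interior_step_nth[OF s _ assms(4)] interior_step_nth[OF s' _ assms(4)]
      inj_on_nth_interior_step[OF assms(1,2,5)]
    by (intro list_eq_by_injective_steps[of "(!) t" s s' "interior_step p k"]) (auto simp: act_def)
qed

lemma interior_distinct_adj_cases: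
  assumes s: "s \<in> simplex p - horn p k" and "distinct_adj s" "k \<le> p"
  shows "s = [0..<Suc p] \<or> s = [0..<k] @ [Suc k..<Suc p]"
proof -
  have sorted: "sorted s" and bound: "set s \<subseteq> {0..p}"
    and full: "\<And>j. j \<le> p \<Longrightarrow> j \<noteq> k \<Longrightarrow> j \<in> set s"
    using s simplex_minus_horn_iff[of s p k] by (auto simp: simplex_def thick_def)
  have distinct: "distinct s"
    using sorted_wrt_less_if_distinct_adj[OF sorted assms(2)] by (simp add: strict_sorted_iff)
  show ?thesis
  proof (cases "k \<in> set s")
    case True
    then have "set s = set [0..<Suc p]" using bound full by fastforce
    then show ?thesis using sorted_distinct_set_unique[OF sorted distinct sorted_upt distinct_upt] by blast
  next
    case False
    let ?gap = "[0..<k] @ [Suc k..<Suc p]"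
    have "set s = {0..p} - {k}" using False bound full by fastforce
    also have "\<dots> = set ?gap" using assms(3) by auto
    finally have "s = ?gap"
      using sorted_distinct_set_unique[OF sorted distinct] by (simp add: sorted_append del: upt_Suc)
    then show ?thesis ..
  qed
qed

lemma remdups_adj_act_interior:
  assumes t: "distinct_adj t" "length t = Suc p" "0 < k" "k < p" "t ! (k - 1) \<noteq> t ! Suc k"
    and s: "s \<in> simplex p - horn p k"
  shows "remdups_adj (act t s) = t \<or> remdups_adj (act t s) = del_nth k t"
proof -
  have "remdups_adj (act t s) = map ((!) t) (remdups_adj s)"
    unfolding act_def
  proof (rule remdups_adj_map_if_adjacent_inj)
    fix i assume i: "Suc i < length s" "s ! i \<noteq> s ! Suc i"
    have "s ! i \<in> set s" using i(1) by simp
    then have "s ! i \<le> p" using s by (auto simp: simplex_def thick_def)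
    then have "s ! i \<in> interior_step p k (s ! i)" by (simp add: interior_step_def)
    then show "t ! (s ! i) \<noteq> t ! (s ! Suc i)"
      using interior_step_nth[OF s i(1) t(4)] inj_on_nth_interior_step[OF t(1,2,5)] i(2)
      by (metis inj_onD)
  qed
  moreover have "remdups_adj s \<in> simplex p - horn p k"
    using s simplex_minus_horn_iff[of s p k] simplex_minus_horn_iff[of "remdups_adj s" p k]
    by (auto simp: simplex_def thick_def)
  then have "remdups_adj s = [0..<Suc p] \<or> remdups_adj s = [0..<k] @ [Suc k..<Suc p]"
    using t(4) by (intro interior_distinct_adj_cases) auto
  moreover have "map ((!) t) [0..<Suc p] = t" using t(2) map_nth[of t] by simp
  moreover have "map ((!) t) [0..<k] = take k t" "map ((!) t) [Suc k..<length t] = drop (Suc k) t"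
    using t(2,4) by (auto intro!: nth_equalityI simp del: upt_Suc)
  then have "map ((!) t) ([0..<k] @ [Suc k..<Suc p]) = del_nth k t"
    using t(2) by (simp add: del_nth_conv_take_drop del: upt_Suc)
  ultimately show ?thesis by auto
qed

section \<open>A matching of nondegenerate simplices\<close>

text \<open>The clause excluding \<open>b = Suc a < h\<close> makes the sorted word missing \<open>h\<close> the partner of the
  sorted word \<open>[0..<Suc n]\<close>, so that the matching preserves \<open>thick_horn n h \<union> simplex n\<close>.\<close>

definition pairable :: "nat \<Rightarrow> nat \<Rightarrow> nat \<Rightarrow> bool" where
  "pairable h a b \<longleftrightarrow> a \<noteq> b \<and> a \<noteq> h \<and> b \<noteq> h \<and> \<not> (b = Suc a \<and> b < h)"

fun toggle :: "nat \<Rightarrow> nat list \<Rightarrow> nat list option" where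
  "toggle h (a # b # r) =
     (if pairable h a b then Some (a # h # b # r)
      else if b = h \<and> r \<noteq> [] \<and> pairable h a (hd r) then Some (a # r)
      else map_option (Cons a) (toggle h (b # r)))"
| "toggle h _ = None"

lemma not_pairable_h [simp]: "\<not> pairable h h b" "\<not> pairable h a h"
  by (simp_all add: pairable_def)

lemma toggle_skip:
  "\<not> pairable h a b \<Longrightarrow> \<not> (b = h \<and> r \<noteq> [] \<and> pairable h a (hd r)) \<Longrightarrow>
   toggle h (a # b # r) = map_option (Cons a) (toggle h (b # r))"
  by auto

lemma toggle_h_Cons: "toggle h (h # c # r) = map_option (Cons h) (toggle h (c # r))"
  by simp

lemma toggle_SomeE:
  assumes "toggle h w = Some w'"
  obtains a b r c u where "w = a # b # r" "w' = a # c # u"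
proof -
  have "\<exists>a b r c u. w = a # b # r \<and> w' = a # c # u"
    using assms
    by (induction h w arbitrary: w' rule: toggle.induct) (auto split: if_splits simp: neq_Nil_conv)
  then show thesis using that by blast
qed

lemma toggle_involution: "toggle h w = Some w' \<Longrightarrow> toggle h w' = Some w"
proof (induction h w arbitrary: w' rule: toggle.induct)
  case (1 h a b r)
  consider (insert) "pairable h a b" | (delete) "\<not> pairable h a b" "b = h \<and> r \<noteq> [] \<and> pairable h a (hd r)"
    | (skip) "\<not> pairable h a b" "\<not> (b = h \<and> r \<noteq> [] \<and> pairable h a (hd r))"
    by blast
  then show ?case
  proof cases
    case insert
    then show ?thesis using 1(2) by (auto simp: pairable_def)
  next
    case delete
    then show ?thesis using 1(2) by (cases r) auto
  next
    case skip
    then obtain u where u: "toggle h (b # r) = Some u" "w' = a # u" using 1(2) by auto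
    obtain c u' where u': "u = b # c # u'" using u(1) by (rule toggle_SomeE) auto
    have "\<not> (b = h \<and> pairable h a c)"
    proof
      assume "b = h \<and> pairable h a c"
      moreover obtain c' r' where "r = c' # r'" using u(1) \<open>b = h \<and> pairable h a c\<close>
        by (cases r) auto
      ultimately have "toggle h (c' # r') = Some (c # u')"
        using u u' by (auto simp: toggle_h_Cons)
      then have "c' = c" by (rule toggle_SomeE) auto
      then show False using skip \<open>r = c' # r'\<close> \<open>b = h \<and> pairable h a c\<close> by simp
    qed
    then have "toggle h w' = map_option (Cons a) (toggle h u)"
      using skip u(2) u' toggle_skip[of h a b "c # u'"] by simp
    then show ?thesis using 1(1)[OF skip u(1)] by simp
  qed
qed auto

lemma toggle_length:
  "toggle h w = Some w' \<Longrightarrow> length w' = Suc (length w) \<or> Suc (length w') = length w"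
  by (induction h w arbitrary: w' rule: toggle.induct) (auto split: if_splits simp: neq_Nil_conv)

lemma set_toggle: "toggle h w = Some w' \<Longrightarrow> insert h (set w') = insert h (set w)"
  by (induction h w arbitrary: w' rule: toggle.induct) (auto split: if_splits simp: neq_Nil_conv)

lemma toggle_shorter:
  "toggle h w = Some w' \<Longrightarrow> length w' < length w \<Longrightarrow>
   \<exists>k. 0 < k \<and> Suc k < length w \<and> w ! k = h \<and> w' = del_nth k w \<and> pairable h (w ! (k - 1)) (w ! Suc k)"
proof (induction h w arbitrary: w' rule: toggle.induct)
  case (1 h a b r)
  show ?case
  proof (cases "\<not> pairable h a b \<and> \<not> (b = h \<and> r \<noteq> [] \<and> pairable h a (hd r))")
    case True
    then obtain u where u: "toggle h (b # r) = Some u" "w' = a # u" using 1(2) by auto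
    with 1 True obtain k where "0 < k" "Suc k < length (b # r)" "(b # r) ! k = h" "u = del_nth k (b # r)"
      "pairable h ((b # r) ! (k - 1)) ((b # r) ! Suc k)" by auto
    then show ?thesis using u(2) by (intro exI[of _ "Suc k"]) (auto simp: nth_Cons')
  next
    case False
    then show ?thesis using 1(2,3) by (cases r) (auto intro: exI[of _ 1] split: if_splits)
  qed
qed auto

lemma distinct_adj_toggle: "toggle h w = Some w' \<Longrightarrow> distinct_adj w \<Longrightarrow> distinct_adj w'"
proof (induction h w arbitrary: w' rule: toggle.induct)
  case (1 h a b r)
  show ?case
  proof (cases "\<not> pairable h a b \<and> \<not> (b = h \<and> r \<noteq> [] \<and> pairable h a (hd r))")
    case True
    then obtain u where u: "toggle h (b # r) = Some u" "w' = a # u" using 1(2) by auto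
    moreover obtain c u' where "u = b # c # u'" using u(1) by (rule toggle_SomeE) auto
    ultimately show ?thesis using 1 True by auto
  next
    case False
    then show ?thesis using 1(2,3) by (cases r) (auto simp: pairable_def split: if_splits)
  qed
qed auto

lemma toggle_None:
  "toggle h w = None \<Longrightarrow> distinct_adj w \<Longrightarrow> Suc h \<in> set w \<Longrightarrow> set w \<subseteq> {h, Suc h}"
proof (induction h w rule: toggle.induct)
  case (1 h a b r)
  have skip: "\<not> pairable h a b" "\<not> (b = h \<and> r \<noteq> [] \<and> pairable h a (hd r))"
    using 1(2) by (auto split: if_splits)
  then have none: "toggle h (b # r) = None" using 1(2) by auto
  have "a \<noteq> b" "distinct_adj (b # r)" using 1(3) by auto
  show ?case
  proof (cases "Suc h \<in> set (b # r)")
    case True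
    then have br: "set (b # r) \<subseteq> {h, Suc h}" using 1(1)[OF skip none \<open>distinct_adj (b # r)\<close>] by blast
    have "a \<in> {h, Suc h}"
    proof (cases "b = h")
      case True
      then obtain c r' where "r = c # r'" using \<open>Suc h \<in> set (b # r)\<close> by (cases r) auto
      then show ?thesis using skip br 1(3) True by (auto simp: pairable_def)
    next
      case False
      then show ?thesis using skip br by (auto simp: pairable_def)
    qed
    then show ?thesis using br by auto
  next
    case False
    then have "a = Suc h" using 1(4) by auto
    then have "b = h" using skip(1) \<open>a \<noteq> b\<close> by (auto simp: pairable_def)
    moreover have "r = []"
    proof (rule ccontr)
      assume "r \<noteq> []"
      then obtain c r' where "r = c # r'" by (cases r) auto
      then show False
        using skip(2) \<open>a = Suc h\<close> \<open>b = h\<close> False 1(3) by (auto simp: pairable_def)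
    qed
    ultimately show ?thesis using \<open>a = Suc h\<close> by auto
  qed
qed auto

lemma toggle_skip_del_nth:
  assumes "\<not> pairable h a b" "\<not> (b = h \<and> r \<noteq> [] \<and> pairable h a (hd r))" "distinct_adj (b # r)"
    and "j < length r" "r ! j = h"
  shows "toggle h (a # b # del_nth j r) = map_option (Cons a) (toggle h (b # del_nth j r))"
proof (rule toggle_skip[OF assms(1)])
  show "\<not> (b = h \<and> del_nth j r \<noteq> [] \<and> pairable h a (hd (del_nth j r)))"
  proof (cases j)
    case 0
    then show ?thesis using assms(3-5) by (cases r) auto
  next
    case (Suc j')
    then show ?thesis using assms(2) by (cases r) auto
  qed
qed

lemma toggle_del_nth_shorter:
  "toggle h t = Some t' \<Longrightarrow> length t' < length t \<Longrightarrow> distinct_adj t \<Longrightarrow> j < length t \<Longrightarrow>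
   t ! j = h \<Longrightarrow> del_nth j t \<noteq> t' \<Longrightarrow>
   \<exists>t''. toggle h (del_nth j t) = Some t'' \<and> length t'' < length (del_nth j t)"
proof (induction h t arbitrary: t' j rule: toggle.induct)
  case (1 h a b r)
  consider (insert) "pairable h a b" | (delete) "\<not> pairable h a b" "b = h \<and> r \<noteq> [] \<and> pairable h a (hd r)"
    | (skip) "\<not> pairable h a b" "\<not> (b = h \<and> r \<noteq> [] \<and> pairable h a (hd r))"
    by blast
  then show ?case
  proof cases
    case insert
    then have "t' = a # h # b # r" using 1(2) by simp
    then show ?thesis using 1(3) by simp
  next
    case delete
    then obtain c r' where r: "r = c # r'" by (cases r) auto
    have "a \<noteq> h" "c \<noteq> h" using delete r by (auto simp: pairable_def)
    have "j \<noteq> 0"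
    proof
      assume "j = 0" then show False using 1(6) \<open>a \<noteq> h\<close> by simp
    qed
    moreover have "j \<noteq> 1" using 1(2,7) delete r by auto
    moreover have "j \<noteq> 2"
    proof
      assume "j = 2" then show False using 1(6) r \<open>c \<noteq> h\<close> by (simp add: numeral_2_eq_2)
    qed
    ultimately obtain j' where "j = Suc (Suc (Suc j'))" by (metis One_nat_def Suc_1 not0_implies_Suc)
    then show ?thesis using delete r by (simp add: pairable_def)
  next
    case skip
    then obtain u where u: "toggle h (b # r) = Some u" "t' = a # u" using 1(2) by auto
    have shorter: "length u < length (b # r)" using u 1(3) by simp
    consider (head) "j = 0" | (second) "j = 1" | (later) j' where "j = Suc (Suc j')"
      by (metis One_nat_def not0_implies_Suc)
    then show ?thesis
    proof cases
      case head
      then show ?thesis using u shorter by simp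
    next
      case second
      then have "b = h" using 1(6) by simp
      then obtain c r' where r: "r = c # r'" using u(1) by (cases r) auto
      then have "toggle h (a # c # r') = map_option (Cons a) (toggle h (c # r'))"
        using skip \<open>b = h\<close> 1(4) by (auto simp: pairable_def)
      then show ?thesis using u shorter second r \<open>b = h\<close> by (auto simp: toggle_h_Cons)
    next
      case later
      then have "\<exists>t''. toggle h (b # del_nth j' r) = Some t'' \<and> length t'' < length (b # del_nth j' r)"
        using 1(1)[OF skip u(1) shorter, of "Suc j'"] 1(4-7) u(2) by auto
      moreover have "toggle h (a # b # del_nth j' r) = map_option (Cons a) (toggle h (b # del_nth j' r))"
        using toggle_skip_del_nth[OF skip] 1(4-6) later by simp
      ultimately show ?thesis using later by auto
    qed
  qed
qed auto

lemma toggle_upt: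
  assumes "m < h" "h < n"
  shows "toggle h ([m..<h] @ [Suc h..<Suc n]) = Some [m..<Suc n]"
  using assms(1)
proof (induction "h - m" arbitrary: m)
  case (Suc d)
  show ?case
  proof (cases "Suc m = h")
    case True
    have "pairable h m (Suc h)" using True by (auto simp: pairable_def)
    then show ?thesis using True assms(2) by (simp add: upt_rec)
  next
    case False
    then have "Suc m < h" using Suc(3) by simp
    then have "toggle h ([Suc m..<h] @ [Suc h..<Suc n]) = Some [Suc m..<Suc n]"
      using Suc by simp
    moreover have "\<not> pairable h m (Suc m)" using \<open>Suc m < h\<close> by (simp add: pairable_def)
    ultimately show ?thesis using \<open>Suc m < h\<close> assms(2) by (simp add: upt_rec)
  qed
qed simp

abbreviation source :: "nat \<Rightarrow> nat \<Rightarrow> nat list set" where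
  "source n h \<equiv> thick_horn n h \<union> simplex n"

lemma toggle_in_thick:
  assumes "toggle h w = Some w'" "w \<in> thick n" "h \<le> n"
  shows "w' \<in> thick n"
proof -
  have "w' \<noteq> []" using assms(1) by (rule toggle_SomeE) simp
  moreover have "set w' \<subseteq> insert h (set w)" using set_toggle[OF assms(1)] by blast
  ultimately show ?thesis using assms(2,3) by (auto simp: thick_def)
qed

lemma toggle_None_in_thick_horn:
  assumes "0 < h" "h < n" "w \<in> thick n" "distinct_adj w" "toggle h w = None"
  shows "w \<in> thick_horn n h"
proof (cases "Suc h \<in> set w")
  case True
  then have "0 \<notin> set w" using toggle_None[OF assms(5,4)] assms(1) by auto
  then show ?thesis using assms(1,3) by (auto simp: thick_horn_iff)
next
  case False
  then show ?thesis using assms(2,3) by (auto simp: thick_horn_iff intro!: exI[of _ "Suc h"])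
qed

lemma toggle_source:
  assumes hn: "0 < h" "h < n" and w: "w \<in> thick n" "distinct_adj w" "toggle h w = Some w'"
    and "w \<in> source n h"
  shows "w' \<in> source n h"
proof (cases "w \<in> thick_horn n h")
  case True
  then obtain j where "j \<le> n" "j \<noteq> h" "j \<notin> set w" by (auto simp: thick_horn_iff)
  then show ?thesis using set_toggle[OF w(3)] toggle_in_thick[OF w(3,1)] hn by (auto simp: thick_horn_iff)
next
  case False
  then have "w \<in> simplex n - horn n h"
    using \<open>w \<in> source n h\<close> by (auto simp: horn_iff thick_horn_iff simplex_def)
  then have "w = [0..<Suc n] \<or> w = [0..<h] @ [Suc h..<Suc n]"
    using hn w(2) by (intro interior_distinct_adj_cases) auto
  moreover have gap: "toggle h ([0..<h] @ [Suc h..<Suc n]) = Some [0..<Suc n]"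
    using hn by (intro toggle_upt) auto
  moreover note toggle_involution[OF gap]
  moreover have "[0..<Suc n] \<in> simplex n" "[0..<h] @ [Suc h..<Suc n] \<in> simplex n"
    using hn by (auto simp: simplex_def thick_def sorted_append simp del: upt_Suc)
  ultimately show ?thesis using w(3) by (elim disjE) (simp_all del: upt_Suc)
qed

text \<open>Top words are the simplices attached one at a time, each along the inner horn that omits the
  face it is matched with.\<close>

definition top_words :: "nat \<Rightarrow> nat \<Rightarrow> nat list set" where
  "top_words n h = {t \<in> thick n. distinct_adj t \<and> t \<notin> source n h \<and>
                      (\<exists>t'. toggle h t = Some t' \<and> length t' < length t)}"

definition top_pos :: "nat \<Rightarrow> nat list \<Rightarrow> nat" where
  "top_pos h t = (SOME k. 0 < k \<and> Suc k < length t \<and> t ! k = h \<and> toggle h t = Some (del_nth k t) \<and>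
                    pairable h (t ! (k - 1)) (t ! Suc k))"

lemma top_pos_spec:
  assumes "toggle h t = Some t'" "length t' < length t"
  shows "0 < top_pos h t" "Suc (top_pos h t) < length t" "t ! top_pos h t = h"
    "toggle h t = Some (del_nth (top_pos h t) t)" "pairable h (t ! (top_pos h t - 1)) (t ! Suc (top_pos h t))"
  using someI_ex[OF toggle_shorter[OF assms]] assms(1) unfolding top_pos_def by auto

lemma top_words_top_pos:
  assumes "t \<in> top_words n h"
  shows "0 < top_pos h t" "Suc (top_pos h t) < length t" "t ! top_pos h t = h"
    "toggle h t = Some (del_nth (top_pos h t) t)" "t ! (top_pos h t - 1) \<noteq> t ! Suc (top_pos h t)"
  using assms top_pos_spec[of h t] unfolding top_words_def pairable_def by auto

lemma partner_in_top_words: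
  assumes hn: "0 < h" "h < n" and c: "c \<in> thick n" "distinct_adj c" "c \<notin> source n h"
    and c': "toggle h c = Some c'" "length c < length c'"
  shows "c' \<in> top_words n h"
proof -
  have "c' \<in> thick n" "distinct_adj c'"
    using toggle_in_thick[OF c'(1) c(1)] distinct_adj_toggle[OF c'(1) c(2)] hn by auto
  moreover have "c' \<notin> source n h"
    using toggle_source[OF hn \<open>c' \<in> thick n\<close> \<open>distinct_adj c'\<close> toggle_involution[OF c'(1)]] c(3) by blast
  ultimately show ?thesis using toggle_involution[OF c'(1)] c'(2) unfolding top_words_def by auto
qed

lemma nondegenerate_cases:
  assumes hn: "0 < h" "h < n" and c: "c \<in> thick n" "distinct_adj c"
  obtains "c \<in> source n h" | "c \<in> top_words n h"
    | c' where "c' \<in> top_words n h" "c = del_nth (top_pos h c') c'" "length c' = Suc (length c)"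
proof (cases "toggle h c")
  case None
  then show ?thesis using toggle_None_in_thick_horn[OF hn c] that(1) by blast
next
  case (Some c')
  consider "length c' < length c" | "length c' = Suc (length c)" using toggle_length[OF Some] by linarith
  then show ?thesis
  proof cases
    case 1
    then show ?thesis using Some c that(1,2) unfolding top_words_def by blast
  next
    case 2
    show ?thesis
    proof (cases "c \<in> source n h")
      case False
      then have "c' \<in> top_words n h" using partner_in_top_words[OF hn c False Some] 2 by simp
      moreover have "c = del_nth (top_pos h c') c'"
        using top_words_top_pos(4)[OF \<open>c' \<in> top_words n h\<close>] toggle_involution[OF Some] by simp
      ultimately show ?thesis using that(3) 2 by blast
    qed (use that(1) in blast)
  qed
qed

lemma length_top_word: assumes "0 < h" "h < n" "t \<in> top_words n h" shows "Suc n \<le> length t"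
proof -
  have "h \<in> set t" using top_words_top_pos[OF assms(3)] by (metis Suc_lessD nth_mem)
  have "x \<in> set t" if "x \<le> n" for x
  proof (cases "x = h")
    case False
    then show ?thesis using that assms(3) by (auto simp: top_words_def thick_horn_iff)
  qed (use \<open>h \<in> set t\<close> in simp)
  then have "{0..n} \<subseteq> set t" by auto
  then show ?thesis using card_mono[OF finite_set, of "{0..n}" t] card_length[of t] by simp
qed

lemma long_words_outside_source:
  assumes "0 < n"
  obtains w where "w \<in> thick n" "distinct_adj w" "w \<notin> source n h" "N \<le> length w"
proof -
  define w where "w = concat (replicate (Suc (Suc N)) [0..<Suc n])"
  have "distinct_adj w"
    unfolding w_def using assms
    by (intro distinct_adj_concat_replicate) (simp_all add: distinct_adj_conv_nth del: upt_Suc)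
  moreover have "\<not> sorted w"
  proof
    let ?rest = "[0..<Suc n] @ concat (replicate N [0..<Suc n])"
    assume "sorted w"
    then have "\<forall>x\<in>set [0..<Suc n]. \<forall>y\<in>set ?rest. x \<le> y"
      unfolding w_def by (simp only: replicate_Suc concat.simps sorted_append) blast
    moreover have "n \<in> set [0..<Suc n]" "0 \<in> set ?rest" by auto
    ultimately show False using assms by fastforce
  qed
  moreover have "set w = {0..n}" unfolding w_def by auto
  moreover have "N \<le> length w" unfolding w_def by (simp add: length_concat sum_list_replicate)
  ultimately show ?thesis using that[of w] unfolding w_def by (auto simp: thick_def thick_horn_iff simplex_def)
qed

lemma infinite_top_words:
  assumes hn: "0 < h" "h < n"
  shows "infinite (top_words n h)"
proof
  assume "finite (top_words n h)"
  then obtain M where M: "\<And>t. t \<in> top_words n h \<Longrightarrow> length t \<le> M"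
    using finite_nat_set_iff_bounded_le[of "length ` top_words n h"] by auto
  obtain w where w: "w \<in> thick n" "distinct_adj w" "w \<notin> source n h" "Suc M \<le> length w"
    using long_words_outside_source[of n] hn by auto
  show False
    by (rule nondegenerate_cases[OF hn w(1,2)]) (use w M in fastforce)+
qed

lemma top_face:
  assumes hn: "0 < h" "h < n" and t: "t \<in> top_words n h"
  defines "t' \<equiv> del_nth (top_pos h t) t"
  shows "t' \<in> thick n" "distinct_adj t'" "t' \<notin> source n h" "toggle h t' = Some t"
    "length t = Suc (length t')" "count_list t h = Suc (count_list t' h)"
proof -
  note pos = top_words_top_pos[OF t]
  have t_in: "t \<in> thick n" "distinct_adj t" "t \<notin> source n h" using t by (auto simp: top_words_def)
  show "toggle h t' = Some t" unfolding t'_def using toggle_involution[OF pos(4)] .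
  show "t' \<in> thick n" "distinct_adj t'"
    unfolding t'_def using toggle_in_thick[OF pos(4) t_in(1)] distinct_adj_toggle[OF pos(4) t_in(2)] hn by auto
  then show "t' \<notin> source n h" using toggle_source[OF hn _ _ \<open>toggle h t' = Some t\<close>] t_in(3) by blast
  show "length t = Suc (length t')" unfolding t'_def using pos(2) by simp
  show "count_list t h = Suc (count_list t' h)"
    unfolding t'_def using pos(2,3) count_list_del_nth[of "top_pos h t" t h] nth_mem[of "top_pos h t" t]
      count_list_0_iff[of t h] by fastforce
qed

lemma top_nth_ne_if_face_grows:
  assumes t: "t \<in> top_words n h" and j: "j < length t" "j \<noteq> top_pos h t"
    and u: "toggle h (del_nth j t) = Some u" "length (del_nth j t) < length u"
  shows "t ! j \<noteq> h"
proof
  assume "t ! j = h"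
  note pos = top_words_top_pos[OF t]
  have "distinct_adj t" using t by (simp add: top_words_def)
  then have ne: "del_nth j t \<noteq> del_nth (top_pos h t) t"
    using del_nth_inj_on_distinct_adj[of t j "top_pos h t"] j pos(2) by auto
  have "length (del_nth (top_pos h t) t) < length t" using pos(2) by simp
  then obtain u' where "toggle h (del_nth j t) = Some u'" "length u' < length (del_nth j t)"
    using toggle_del_nth_shorter[OF pos(4) _ \<open>distinct_adj t\<close> j(1) \<open>t ! j = h\<close> ne] by blast
  then show False using u by simp
qed

text \<open>Top words are attached in order of length and, among words of equal length, in decreasing
  number of entries \<open>h\<close>.\<close>

definition weight :: "nat \<Rightarrow> nat list \<Rightarrow> nat" where
  "weight h t = length t * length t + (length t - count_list t h)"

lemma weight_less_if_shorter:
  assumes "length a < length b"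
  shows "weight h a < weight h b"
proof -
  have "Suc (length a) \<le> length b" using assms by simp
  then have "Suc (length a) * Suc (length a) \<le> length b * length b" using mult_le_mono by blast
  then show ?thesis unfolding weight_def by simp
qed

lemma length_le_if_weight_less: "weight h a < weight h b \<Longrightarrow> length a \<le> length b"
  using weight_less_if_shorter[of b a h] by linarith

lemma length_eq_if_weight_eq: "weight h a = weight h b \<Longrightarrow> length a = length b"
  using weight_less_if_shorter[of a b h] weight_less_if_shorter[of b a h] by linarith

lemma weight_less_if_more_h:
  "length a = length b \<Longrightarrow> count_list a h = Suc (count_list b h) \<Longrightarrow> weight h a < weight h b"
  unfolding weight_def using count_le_length[of a h] by simp

lemma face_partner_lighter:
  assumes hn: "0 < h" "h < n" and t: "t \<in> top_words n h" and j: "j < length t" "j \<noteq> top_pos h t"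
    and c': "c' \<in> top_words n h" "remdups_adj (del_nth j t) = del_nth (top_pos h c') c'"
  shows "weight h c' < weight h t"
proof -
  let ?d = "del_nth j t"
  note face = top_face[OF hn c'(1), folded c'(2)]
  have len: "length ?d = length t - 1" "1 < length t"
    using j top_words_top_pos(2)[OF t] by auto
  show ?thesis
  proof (cases "length (remdups_adj ?d) < length ?d")
    case True
    then show ?thesis using face(5) len by (intro weight_less_if_shorter) simp
  next
    case False
    then have "remdups_adj ?d = ?d"
      by (simp add: distinct_adj_conv_length_remdups_adj[symmetric] distinct_adj_altdef order_less_le)
    then have "t ! j \<noteq> h"
      using top_nth_ne_if_face_grows[OF t j] face(4,5) by simp
    then have "count_list c' h = Suc (count_list t h)"
      using face(6) \<open>remdups_adj ?d = ?d\<close> count_list_del_nth[OF j(1)] by simp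
    then show ?thesis using face(5) \<open>remdups_adj ?d = ?d\<close> len by (intro weight_less_if_more_h) auto
  qed
qed

lemma top_not_in_generated_lighter:
  assumes "g \<in> top_words n h" "t \<in> top_words n h" "g \<noteq> t" "weight h g \<le> weight h t"
  shows "t \<notin> generated g"
proof
  assume "t \<in> generated g"
  moreover have "distinct_adj t" "g \<noteq> []" using assms(1,2) by (auto simp: top_words_def thick_def)
  ultimately have "subseq t g" by (intro subseq_if_in_generated)
  moreover have "length g \<le> length t"
    using assms(4) weight_less_if_shorter[of t g h] by linarith
  ultimately show False using assms(3) subseq_same_length list_emb_length by fastforce
qed

lemma top_face_not_in_generated_lighter:
  assumes hn: "0 < h" "h < n" and g: "g \<in> top_words n h" and t: "t \<in> top_words n h"
    and "g \<noteq> t" "weight h g \<le> weight h t"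
  shows "del_nth (top_pos h t) t \<notin> generated g"
proof
  define t' where "t' = del_nth (top_pos h t) t"
  note t' = top_face[OF hn t, folded t'_def]
  assume "t' \<in> generated g"
  then have sub: "subseq t' g"
    using t'(2) g by (intro subseq_if_in_generated) (auto simp: top_words_def thick_def)
  have "length g \<le> length t" using assms(6) weight_less_if_shorter[of t g h] by linarith
  consider "length g = length t'" | "length g = length t"
    using list_emb_length[OF sub] t'(5) \<open>length g \<le> length t\<close> by linarith
  then show False
  proof cases
    case 1
    then have "g = t'" using sub subseq_same_length by metis
    then show False using g t'(4,5) by (auto simp: top_words_def)
  next
    case 2
    then obtain j where j: "j < length g" "t' = del_nth j g"
      using subseq_Suc_length_del_nth[OF sub] t'(5) by auto
    have "j \<noteq> top_pos h g"
      using j(2) t'(4) top_face(4)[OF hn g] \<open>g \<noteq> t\<close> by auto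
    then have "g ! j \<noteq> h" using top_nth_ne_if_face_grows[OF g j(1)] j(2) t'(4,5) by auto
    then have "count_list t h = Suc (count_list g h)"
      using t'(6) j count_list_del_nth[of j g h] by simp
    then have "weight h t < weight h g" using 2 by (intro weight_less_if_more_h) simp_all
    then show False using assms(6) by simp
  qed
qed

section \<open>Enumerating the top words\<close>

fun from_digits :: "nat \<Rightarrow> nat list \<Rightarrow> nat" where
  "from_digits B [] = 0"
| "from_digits B (x # xs) = x + B * from_digits B xs"

lemma from_digits_less: "\<forall>x\<in>set xs. x < B \<Longrightarrow> from_digits B xs < B ^ length xs"
proof (induction xs)
  case (Cons x xs)
  then have "Suc (from_digits B xs) \<le> B ^ length xs" by simp
  then have "B * from_digits B xs + B \<le> B * B ^ length xs"
    using mult_le_mono2[of "Suc (from_digits B xs)" "B ^ length xs" B] by simp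
  then show ?case using Cons.prems by simp
qed simp

lemma from_digits_inj:
  "length xs = length ys \<Longrightarrow> \<forall>x\<in>set xs. x < B \<Longrightarrow> \<forall>y\<in>set ys. y < B \<Longrightarrow>
   from_digits B xs = from_digits B ys \<Longrightarrow> xs = ys"
proof (induction xs arbitrary: ys)
  case (Cons x xs)
  then obtain y ys' where ys: "ys = y # ys'" by (cases ys) auto
  have "x = (x + B * from_digits B xs) mod B" using Cons.prems(2) by simp
  also have "\<dots> = (y + B * from_digits B ys') mod B" using Cons.prems(4) ys by simp
  also have "\<dots> = y" using Cons.prems(3) ys by simp
  finally have "x = y" .
  then show ?case using Cons ys by auto
qed simp

text \<open>Placing the word, read in base \<open>Suc n\<close>, below the weight gives an injection into \<open>\<nat>\<close> that is
  strictly monotone in the weight.\<close>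

definition rank :: "nat \<Rightarrow> nat \<Rightarrow> nat list \<Rightarrow> nat" where
  "rank n h t = weight h t * Suc n ^ length t + from_digits (Suc n) t"

lemma rank_less_if_weight_less:
  assumes "a \<in> thick n" "b \<in> thick n" "weight h a < weight h b"
  shows "rank n h a < rank n h b"
proof -
  have "\<forall>x\<in>set a. x < Suc n" using assms(1) by (auto simp: thick_def)
  then have "rank n h a < Suc (weight h a) * Suc n ^ length a"
    using from_digits_less[of a "Suc n"] unfolding rank_def by simp
  also have "\<dots> \<le> weight h b * Suc n ^ length a" using assms(3) by (intro mult_le_mono1) simp
  also have "\<dots> \<le> weight h b * Suc n ^ length b"
    using power_increasing[OF length_le_if_weight_less[OF assms(3)], of "Suc n"] by simp
  also have "\<dots> \<le> rank n h b" unfolding rank_def by simp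
  finally show ?thesis .
qed

lemma inj_on_rank: "inj_on (rank n h) (thick n)"
proof (rule inj_onI)
  fix a b assume ab: "a \<in> thick n" "b \<in> thick n" "rank n h a = rank n h b"
  have weight: "weight h a = weight h b"
  proof (rule ccontr)
    assume "weight h a \<noteq> weight h b"
    then consider "weight h a < weight h b" | "weight h b < weight h a" by linarith
    then show False
      using rank_less_if_weight_less[where h = h, OF ab(1,2)] rank_less_if_weight_less[where h = h, OF ab(2,1)] ab(3)
      by cases auto
  qed
  then have "length a = length b" by (rule length_eq_if_weight_eq)
  moreover have "\<forall>x\<in>set a. x < Suc n" "\<forall>x\<in>set b. x < Suc n" using ab(1,2) by (auto simp: thick_def)
  moreover have "from_digits (Suc n) a = from_digits (Suc n) b"
    using ab(3) weight \<open>length a = length b\<close> unfolding rank_def by simp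
  ultimately show "a = b" by (rule from_digits_inj)
qed

lemma monotone_enumeration:
  fixes r w :: "'a \<Rightarrow> nat"
  assumes "infinite A" "inj_on r A" "\<And>a b. a \<in> A \<Longrightarrow> b \<in> A \<Longrightarrow> w a < w b \<Longrightarrow> r a < r b"
  obtains e :: "nat \<Rightarrow> 'a" where "bij_betw e UNIV A" "mono (\<lambda>l. w (e l))"
proof -
  let ?V = "r ` A"
  define e where "e l = inv_into A r (enumerate ?V l)" for l
  have V: "infinite ?V" using assms(1,2) finite_imageD by blast
  have "bij_betw (inv_into A r) ?V A" using assms(2) by (simp add: bij_betw_inv_into inj_on_imp_bij_betw)
  then have "bij_betw e UNIV A"
    using bij_betw_trans[OF bij_enumerate[OF V]] unfolding e_def comp_def by blast
  moreover have "mono (\<lambda>l. w (e l))"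
  proof (rule monoI, rule ccontr)
    fix l l' :: nat assume "l \<le> l'" "\<not> w (e l) \<le> w (e l')"
    moreover have "e l \<in> A" "e l' \<in> A" "r (e l) = enumerate ?V l" "r (e l') = enumerate ?V l'"
      using enumerate_in_set[OF V] unfolding e_def by (auto simp: f_inv_into_f inv_into_into)
    ultimately have "enumerate ?V l' < enumerate ?V l" using assms(3)[of "e l'" "e l"] by simp
    then show False using \<open>l \<le> l'\<close> V by simp
  qed
  ultimately show thesis by (rule that)
qed

section \<open>The filtration\<close>

locale top_enumeration =
  fixes n h :: nat and e :: "nat \<Rightarrow> nat list"
  assumes inner: "0 < h" "h < n"
    and enum: "bij_betw e UNIV (top_words n h)"
    and weight_mono: "mono (\<lambda>l. weight h (e l))"
begin

text \<open>\<open>stage l\<close> is the filtration step \<open>F\<^sub>l\<^sub>-\<^sub>1\<close> of the definition; \<open>e l\<close> is the top word attached next.\<close>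

definition stage :: "nat \<Rightarrow> nat list set" where
  "stage l = source n h \<union> (\<Union>m<l. generated (e m))"

lemma e_top: "e l \<in> top_words n h"
  using enum by (auto simp: bij_betw_def)

lemma e_surj: "t \<in> top_words n h \<Longrightarrow> \<exists>l. e l = t"
  using enum unfolding bij_betw_def by (metis rangeE)

lemma e_word: "e l \<in> thick n" "distinct_adj (e l)" "e l \<noteq> []"
  using e_top[of l] by (auto simp: top_words_def thick_def)

lemma ssubset_stage: "ssubset n (stage l)"
  unfolding stage_def
  by (intro ssubset_Un ssubset_thick_horn ssubset_simplex ssubset_UN ssubset_generated e_word)

lemma stage_Suc: "stage (Suc l) = stage l \<union> generated (e l)"
  unfolding stage_def by (auto simp: lessThan_Suc)

lemma source_subset_stage: "source n h \<subseteq> stage l"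
  unfolding stage_def by blast

lemma generated_subset_stage: "m < l \<Longrightarrow> generated (e m) \<subseteq> stage l"
  unfolding stage_def by blast

lemma generated_lighter_top_subset_stage:
  assumes "c \<in> top_words n h" "weight h c < weight h (e l)"
  shows "generated c \<subseteq> stage l"
proof -
  obtain m where m: "e m = c" using e_surj[OF assms(1)] by blast
  have "m < l"
  proof (rule ccontr)
    assume "\<not> m < l"
    then show False using monoD[OF weight_mono, of l m] m assms(2) by simp
  qed
  then show ?thesis using generated_subset_stage m by blast
qed

lemma face_in_stage:
  assumes j: "j < length (e l)" "j \<noteq> top_pos h (e l)"
  shows "del_nth j (e l) \<in> stage l"
proof -
  define d where "d = del_nth j (e l)"
  have "1 < length (e l)" using top_words_top_pos(2)[OF e_top[of l]] by simp
  then have "d \<in> thick n"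
    using del_nth_in_generated[OF j(1)] ssubset_generated[OF e_word(1)] unfolding d_def ssubset_def by auto
  then have "d \<noteq> []" by (simp add: thick_def)
  have c: "remdups_adj d \<in> thick n" "distinct_adj (remdups_adj d)"
    using \<open>d \<in> thick n\<close> by (simp_all add: remdups_adj_in_thick)
  have "remdups_adj d \<in> stage l"
  proof (cases rule: nondegenerate_cases[OF inner c])
    case 1
    then show ?thesis using source_subset_stage by blast
  next
    case 2
    have "length (remdups_adj d) < length (e l)"
      using remdups_adj_length[of d] j(1) unfolding d_def by simp
    then have "weight h (remdups_adj d) < weight h (e l)" by (rule weight_less_if_shorter)
    moreover have "remdups_adj d \<in> generated (remdups_adj d)"
      using c(1) by (intro self_in_generated) (simp add: thick_def)
    ultimately show ?thesis using generated_lighter_top_subset_stage[OF 2] by blast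
  next
    case (3 c')
    then have "weight h c' < weight h (e l)"
      using face_partner_lighter[OF inner e_top j] unfolding d_def by blast
    moreover have "remdups_adj d \<in> generated c'"
      using 3(2) del_nth_in_generated top_words_top_pos(2)[OF 3(1)] by simp
    ultimately show ?thesis using generated_lighter_top_subset_stage[OF 3(1)] by blast
  qed
  then show ?thesis
    using ssubset_generated_subset[OF ssubset_stage] in_generated_remdups_adj[OF \<open>d \<noteq> []\<close>]
    unfolding d_def by blast
qed

lemma interior_not_in_stage:
  assumes s: "s \<in> simplex (length (e l) - 1) - horn (length (e l) - 1) (top_pos h (e l))"
  shows "act (e l) s \<notin> stage l"
proof
  let ?t = "e l" and ?k = "top_pos h (e l)"
  note pos = top_words_top_pos[OF e_top[of l]]
  note face = top_face[OF inner e_top[of l]]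
  assume "act ?t s \<in> stage l"
  moreover have "act ?t s \<noteq> []" using s by (auto simp: simplex_def thick_def act_def)
  ultimately have in_stage: "remdups_adj (act ?t s) \<in> stage l"
    using remdups_adj_in_generated ssubset_generated_subset[OF ssubset_stage] by blast
  have c: "remdups_adj (act ?t s) = ?t \<or> remdups_adj (act ?t s) = del_nth ?k ?t"
    using remdups_adj_act_interior[OF e_word(2) _ pos(1) _ pos(5) s] pos(2) by simp
  then have "remdups_adj (act ?t s) \<notin> source n h"
    using face(3) e_top[of l] by (auto simp: top_words_def)
  then obtain m where m: "m < l" "remdups_adj (act ?t s) \<in> generated (e m)"
    using in_stage unfolding stage_def by blast
  moreover have "e m \<noteq> ?t" using enum m(1) by (auto simp: bij_betw_def inj_eq)
  moreover have "weight h (e m) \<le> weight h ?t" using monoD[OF weight_mono] m(1) by simp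
  ultimately show False
    using c top_not_in_generated_lighter[OF e_top e_top] top_face_not_in_generated_lighter[OF inner e_top e_top]
    by metis
qed

lemma thick_subset_stages:
  assumes w: "w \<in> thick n"
  shows "\<exists>l. w \<in> stage l"
proof -
  define c where "c = remdups_adj w"
  have "w \<noteq> []" using w by (simp add: thick_def)
  then have c: "c \<in> thick n" "distinct_adj c" "w \<in> generated c"
    using ssubset_generated[OF w] remdups_adj_in_generated in_generated_remdups_adj
    unfolding c_def ssubset_def by auto
  show ?thesis
  proof (cases rule: nondegenerate_cases[OF inner c(1,2)])
    case 1
    then have "w \<in> source n h"
      using ssubset_generated_subset[OF ssubset_Un[OF ssubset_thick_horn ssubset_simplex]] c(3) by blast
    then show ?thesis using source_subset_stage by blast
  next
    case 2
    then obtain m where "e m = c" using e_surj by blast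
    then show ?thesis using c(3) generated_subset_stage[of m "Suc m"] by blast
  next
    case (3 c')
    then obtain m where m: "e m = c'" using e_surj by blast
    have "c \<in> generated c'" using 3(2) del_nth_in_generated top_words_top_pos(2)[OF 3(1)] by simp
    then have "w \<in> generated (e m)" using m c(3) generated_trans e_word(3) by blast
    then show ?thesis using generated_subset_stage[of m "Suc m"] by blast
  qed
qed

lemma smap_act_simplex: "smap (simplex (length (e l) - 1)) (stage (Suc l)) (act (e l))"
  unfolding smap_def stage_Suc generated_def by (auto simp: act_act)

lemma smap_act_horn: "smap (horn (length (e l) - 1) (top_pos h (e l))) (stage l) (act (e l))"
  unfolding smap_def
proof (intro ballI conjI allI impI)
  fix s assume "s \<in> horn (length (e l) - 1) (top_pos h (e l))"
  then obtain j where j: "s \<in> simplex (length (e l) - 1)" "j \<le> length (e l) - 1" "j \<noteq> top_pos h (e l)" "j \<notin> set s"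
    unfolding horn_iff by blast
  have "1 < length (e l)" using top_words_top_pos(2)[OF e_top[of l]] by simp
  then have "act (e l) s \<in> generated (del_nth j (e l))"
    using j by (intro act_in_generated_del_nth) auto
  moreover have "j < length (e l)" using j(2) \<open>1 < length (e l)\<close> by linarith
  ultimately show "act (e l) s \<in> stage l"
    using ssubset_generated_subset[OF ssubset_stage face_in_stage[OF _ j(3)]] by blast
qed (simp_all add: act_act)

lemma pushout_stage:
  "pushout_incl (stage l) (horn (length (e l) - 1) (top_pos h (e l)))
     (simplex (length (e l) - 1)) (stage (Suc l)) (act (e l)) (act (e l))"
  unfolding pushout_incl_def
proof (intro conjI ballI)
  note pos = top_words_top_pos[OF e_top[of l]]
  have "length (e l) = Suc (length (e l) - 1)" using pos(2) by simp
  then show "inj_on (act (e l)) (simplex (length (e l) - 1) - horn (length (e l) - 1) (top_pos h (e l)))"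
    using pos(2) by (intro inj_on_act_interior[OF e_word(2) _ pos(1) _ pos(5)]) auto
  show "act (e l) ` (simplex (length (e l) - 1) - horn (length (e l) - 1) (top_pos h (e l))) \<inter> stage l = {}"
    using interior_not_in_stage by blast
qed (auto simp: horn_iff stage_Suc generated_def)

lemma length_e_mono: "length (e l) \<le> length (e (Suc l))"
  using monoD[OF weight_mono, of l "Suc l"] weight_less_if_shorter[of "e (Suc l)" "e l" h] by linarith

lemma inner_expansion_stages: "inner_expansion n n (source n h) (thick n)"
proof -
  have "thick n = (\<Union>k\<in>{k. enat k \<le> \<infinity>}. stage k)"
    using thick_subset_stages ssubset_stage by (auto simp: ssubset_def)
  moreover have "n \<le> length (e l) - 1" "0 < top_pos h (e l)" "top_pos h (e l) < length (e l) - 1" for l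
    using length_top_word[OF inner e_top[of l]] top_words_top_pos(1,2)[OF e_top[of l]] by auto
  ultimately show ?thesis
    unfolding inner_expansion_def
    using inner ssubset_Un[OF ssubset_thick_horn ssubset_simplex] ssubset_thick ssubset_stage
      smap_act_simplex smap_act_horn pushout_stage length_e_mono
    by (intro conjI exI[of _ \<infinity>] exI[of _ stage] exI[of _ "\<lambda>l. length (e l) - 1"]
        exI[of _ "\<lambda>l. top_pos h (e l)"] exI[of _ "\<lambda>l. act (e l)"] exI[of _ "\<lambda>l. act (e l)"])
      (auto simp: thick_horn_iff simplex_def stage_def ssubset_def diff_le_mono)
qed

end

theorem lemma6p4:
  fixes n i :: nat
  assumes "0 < i" and "i < n"
  shows "inner_expansion n n (thick_horn n i \<union> simplex n) (thick n)"
proof -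
  have tops: "top_words n i \<subseteq> thick n" by (auto simp: top_words_def)
  have inj: "inj_on (rank n i) (top_words n i)" using inj_on_rank tops by (rule inj_on_subset)
  have rank: "rank n i a < rank n i b"
    if "a \<in> top_words n i" "b \<in> top_words n i" "weight i a < weight i b" for a b
    using that tops by (intro rank_less_if_weight_less) auto
  obtain e :: "nat \<Rightarrow> nat list" where "bij_betw e UNIV (top_words n i)" "mono (\<lambda>l. weight i (e l))"
    by (rule monotone_enumeration[OF infinite_top_words[OF assms] inj rank])
  then interpret top_enumeration n i e
    using assms by unfold_locales
  show ?thesis by (rule inner_expansion_stages)
qed

end
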